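(* Let $\mathcal{X}\subseteq\mathbb{R}^n$, $\mathcal{Y}=\{0,1\}$, let $\mathcal{Z}$ be a set (the representation space), let $\mathcal{G}$ be a class of functions $g:\mathcal{X}\to\mathcal{Z}$ and $\mathcal{F}$ a class of functions $f:\mathcal{Z}\to\mathcal{Y}$. Let $p_S,p_T$ be probability distributions on $\mathcal{X}\times\mathcal{Y}$. Then for all $f\in\mathcal{F}$ and $g\in\mathcal{G}$, $$R_T(fg)\le R_S(fg)+d_{\mathcal{F}\Delta\mathcal{F}}\big(p_S^g(Z),p_T^g(Z)\big)+d_{\mathcal{F}_{\mathcal{G}\Delta\mathcal{G}}}(p_S,p_T)+\lambda_{\mathcal{F}\mathcal{G}}(g),$$ where $$\lambda_{\mathcal{F}\mathcal{G}}(g)=\inf_{f'\in\mathcal{F},\,g'\in\mathcal{G}}\Big[2R_S(f'g)+R_S(f'g')+R_T(f'g')\Big].$$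
   Context: $fg$ denotes the composition $f\circ g:\mathcal{X}\to\mathcal{Y}$. The loss $\ell$ is the zero-one loss $\ell(a,b)=\mathbf{1}[a\neq b]$. For a hypothesis $h:\mathcal{X}\to\mathcal{Y}$ and $D\in\{S,T\}$, the risk is $R_D(h)=\mathbb{E}_{(x,y)\sim p_D}[\ell(h(x),y)]$, and for two hypotheses $h,h'$ the disagreement is $R_D(h,h')=\mathbb{E}_{x\sim p_D}[\ell(h(x),h'(x))]$, where $x\sim p_D$ refers to the marginal of $p_D$ on $\mathcal{X}$. $p_S^g(Z)$, $p_T^g(Z)$ denote the distributions of $g(X)$ for $X$ drawn from the $\mathcal{X}$-marginal of $p_S$, resp. $p_T$. The latent divergence is $d_{\mathcal{F}\Delta\mathcal{F}}(p_S^g(Z),p_T^g(Z))=\sup_{f_1,f_2\in\mathcal{F}}|R_S(f_1g,f_2g)-R_T(f_1g,f_2g)|$. The $\mathcal{F}_{\mathcal{G}\Delta\mathcal{G}}$-divergence is $d_{\mathcal{F}_{\mathcal{G}\Delta\mathcal{G}}}(p_S,p_T)=\sup_{f\in\mathcal{F};\,g_1,g_2\in\mathcal{G}}|R_S(fg_1,fg_2)-R_T(fg_1,fg_2)|$. *)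

theory Defs
  imports "HOL-Probability.Probability"
begin

definition loss01 :: "'y \<Rightarrow> 'y \<Rightarrow> real" where
  "loss01 a b = (if a \<noteq> b then 1 else 0)"

definition risk :: "('x \<times> 'y) measure \<Rightarrow> ('x \<Rightarrow> 'y) \<Rightarrow> real" where
  "risk M h = (\<integral>p. loss01 (h (fst p)) (snd p) \<partial>M)"

definition marginal :: "'x measure \<Rightarrow> ('x \<times> 'y) measure \<Rightarrow> 'x measure" where
  "marginal MX M = distr M MX fst"

definition disagree :: "'x measure \<Rightarrow> ('x \<times> 'y) measure \<Rightarrow> ('x \<Rightarrow> 'y) \<Rightarrow> ('x \<Rightarrow> 'y) \<Rightarrow> real" where
  "disagree MX M h h' = (\<integral>x. loss01 (h x) (h' x) \<partial>(marginal MX M))"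

definition latent_div ::
  "'x measure \<Rightarrow> ('x \<times> 'y) measure \<Rightarrow> ('x \<times> 'y) measure \<Rightarrow> ('z \<Rightarrow> 'y) set \<Rightarrow> ('x \<Rightarrow> 'z) \<Rightarrow> real" where
  "latent_div MX pS pT F g =
     Sup {\<bar>disagree MX pS (f1 \<circ> g) (f2 \<circ> g) - disagree MX pT (f1 \<circ> g) (f2 \<circ> g)\<bar> | f1 f2. f1 \<in> F \<and> f2 \<in> F}"

definition FG_div ::
  "'x measure \<Rightarrow> ('x \<times> 'y) measure \<Rightarrow> ('x \<times> 'y) measure \<Rightarrow> ('z \<Rightarrow> 'y) set \<Rightarrow> ('x \<Rightarrow> 'z) set \<Rightarrow> real" where
  "FG_div MX pS pT F G =
     Sup {\<bar>disagree MX pS (f \<circ> g1) (f \<circ> g2) - disagree MX pT (f \<circ> g1) (f \<circ> g2)\<bar> | f g1 g2. f \<in> F \<and> g1 \<in> G \<and> g2 \<in> G}"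

definition lambda_FG ::
  "('x \<times> 'y) measure \<Rightarrow> ('x \<times> 'y) measure \<Rightarrow> ('z \<Rightarrow> 'y) set \<Rightarrow> ('x \<Rightarrow> 'z) set \<Rightarrow> ('x \<Rightarrow> 'z) \<Rightarrow> real" where
  "lambda_FG pS pT F G g =
     Inf {2 * risk pS (f' \<circ> g) + risk pS (f' \<circ> g') + risk pT (f' \<circ> g') | f' g'. f' \<in> F \<and> g' \<in> G}"

end

theory Submission
  imports Defs
begin

text \<open>
  Write \<open>h = f g\<close>, \<open>h' = f' g\<close> and \<open>h'' = f' g'\<close>. Since the zero-one loss is a metric, risks and
  disagreements satisfy triangle inequalities, so
  \<open>R_T(h) \<le> R_T(h, h') + R_T(h', h'') + R_T(h'')\<close>.
  The two target disagreements are compared with the source ones: \<open>h, h'\<close> share the encoder \<open>g\<close>,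
  so the latent divergence pays for the first; \<open>h', h''\<close> share the head \<open>f'\<close>, so the
  \<open>F_{G\<Delta>G}\<close>-divergence pays for the second. Finally each source disagreement is bounded by a
  sum of source risks through the labels, \<open>R_S(h, h') \<le> R_S(h) + R_S(h')\<close>, and similarly for
  \<open>h', h''\<close>. Taking the infimum over \<open>f', g'\<close> yields \<open>\<lambda>_{FG}(g)\<close>.
\<close>

lemma loss01_commute: "loss01 a b = loss01 b a"
  by (auto simp: loss01_def)

lemma loss01_triangle: "loss01 a c \<le> loss01 a b + loss01 b c"
  by (auto simp: loss01_def)

lemma measurable_loss01:
  fixes u v :: "'a \<Rightarrow> 'y::countable"
  assumes "u \<in> measurable N (count_space UNIV)" "v \<in> measurable N (count_space UNIV)"
  shows "(\<lambda>x. loss01 (u x) (v x)) \<in> borel_measurable N"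
proof -
  have "(\<lambda>x. loss01 a (v x)) \<in> borel_measurable N" for a
    by (rule measurable_compose_countable[where f="\<lambda>b x. loss01 a b", OF _ assms(2)]) simp
  then show ?thesis
    by (rule measurable_compose_countable[where f="\<lambda>a x. loss01 a (v x)", OF _ assms(1)])
qed

lemma integral_loss01_nonneg: "0 \<le> (\<integral>x. loss01 (u x) (v x) \<partial>M)"
  by (rule integral_nonneg_AE) (auto simp: loss01_def)

context prob_space
begin

lemma integrable_loss01:
  fixes u v :: "'a \<Rightarrow> 'y::countable"
  assumes "u \<in> measurable M (count_space UNIV)" "v \<in> measurable M (count_space UNIV)"
  shows "integrable M (\<lambda>x. loss01 (u x) (v x))"
  by (rule integrable_const_bound[where B=1])
    (simp add: loss01_def, rule measurable_loss01[OF assms])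

lemma integral_loss01_le_1:
  fixes u v :: "'a \<Rightarrow> 'y::countable"
  assumes "u \<in> measurable M (count_space UNIV)" "v \<in> measurable M (count_space UNIV)"
  shows "(\<integral>x. loss01 (u x) (v x) \<partial>M) \<le> 1"
proof -
  have "(\<integral>x. loss01 (u x) (v x) \<partial>M) \<le> (\<integral>x. 1 \<partial>M)"
    by (rule integral_mono) (auto intro: integrable_loss01 assms, simp add: loss01_def)
  then show ?thesis
    by (simp add: prob_space)
qed

lemma integral_loss01_triangle:
  fixes u v w :: "'a \<Rightarrow> 'y::countable"
  assumes "u \<in> measurable M (count_space UNIV)" "v \<in> measurable M (count_space UNIV)"
    and "w \<in> measurable M (count_space UNIV)"
  shows "(\<integral>x. loss01 (u x) (w x) \<partial>M)
           \<le> (\<integral>x. loss01 (u x) (v x) \<partial>M) + (\<integral>x. loss01 (v x) (w x) \<partial>M)"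
proof -
  have "(\<integral>x. loss01 (u x) (w x) \<partial>M) \<le> (\<integral>x. loss01 (u x) (v x) + loss01 (v x) (w x) \<partial>M)"
    by (rule integral_mono)
      (auto intro!: integrable_loss01 assms loss01_triangle Bochner_Integration.integrable_add)
  also have "\<dots> = (\<integral>x. loss01 (u x) (v x) \<partial>M) + (\<integral>x. loss01 (v x) (w x) \<partial>M)"
    by (rule Bochner_Integration.integral_add) (auto intro: integrable_loss01 assms)
  finally show ?thesis .
qed

end

locale labelled_prob_space = prob_space M
  for M :: "('x \<times> 'y::countable) measure" +
  fixes MX :: "'x measure"
  assumes sets_eq_pair: "sets M = sets (MX \<Otimes>\<^sub>M count_space UNIV)"
begin

lemma measurable_fst [measurable]: "fst \<in> measurable M MX"
  by (simp add: measurable_cong_sets[OF sets_eq_pair refl])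

lemma measurable_snd [measurable]: "snd \<in> measurable M (count_space UNIV)"
  by (simp add: measurable_cong_sets[OF sets_eq_pair refl])

lemma measurable_comp_fst [intro]:
  "h \<in> measurable MX N \<Longrightarrow> (\<lambda>p. h (fst p)) \<in> measurable M N"
  using measurable_compose[OF measurable_fst] .

lemma disagree_eq_integral:
  assumes "h \<in> measurable MX (count_space UNIV)" "h' \<in> measurable MX (count_space UNIV)"
  shows "disagree MX M h h' = (\<integral>p. loss01 (h (fst p)) (h' (fst p)) \<partial>M)"
  unfolding disagree_def marginal_def
  by (subst integral_distr) (auto intro: measurable_loss01 assms)

lemma disagree_nonneg:
  assumes "h \<in> measurable MX (count_space UNIV)" "h' \<in> measurable MX (count_space UNIV)"
  shows "0 \<le> disagree MX M h h'"
  by (simp add: disagree_eq_integral assms integral_loss01_nonneg)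

lemma disagree_le_1:
  assumes "h \<in> measurable MX (count_space UNIV)" "h' \<in> measurable MX (count_space UNIV)"
  shows "disagree MX M h h' \<le> 1"
  unfolding disagree_eq_integral[OF assms]
  by (rule integral_loss01_le_1) (auto intro: assms)

lemma risk_le_disagree_add_risk:
  assumes "h \<in> measurable MX (count_space UNIV)" "h' \<in> measurable MX (count_space UNIV)"
  shows "risk M h \<le> disagree MX M h h' + risk M h'"
  unfolding risk_def disagree_eq_integral[OF assms]
  by (rule integral_loss01_triangle) (auto intro: assms)

lemma disagree_le_risk_add_risk:
  assumes "h \<in> measurable MX (count_space UNIV)" "h' \<in> measurable MX (count_space UNIV)"
  shows "disagree MX M h h' \<le> risk M h + risk M h'"
proof -
  have "(\<integral>p. loss01 (h (fst p)) (h' (fst p)) \<partial>M)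
          \<le> risk M h + (\<integral>p. loss01 (snd p) (h' (fst p)) \<partial>M)"
    unfolding risk_def by (rule integral_loss01_triangle) (auto intro: assms)
  then show ?thesis
    by (simp add: disagree_eq_integral assms risk_def loss01_commute)
qed

end

lemma abs_disagree_diff_le_1:
  assumes "labelled_prob_space pS MX" "labelled_prob_space pT MX"
    and "h \<in> measurable MX (count_space UNIV)" "h' \<in> measurable MX (count_space UNIV)"
  shows "\<bar>disagree MX pS h h' - disagree MX pT h h'\<bar> \<le> 1"
  using labelled_prob_space.disagree_nonneg[OF assms(1,3,4)]
    labelled_prob_space.disagree_le_1[OF assms(1,3,4)]
    labelled_prob_space.disagree_nonneg[OF assms(2,3,4)]
    labelled_prob_space.disagree_le_1[OF assms(2,3,4)]
  by (simp add: abs_le_iff)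

lemma disagree_le_add_latent_div:
  assumes S: "labelled_prob_space pS MX" and T: "labelled_prob_space pT MX"
    and "\<forall>f\<in>F. f \<circ> g \<in> measurable MX (count_space UNIV)"
    and "f1 \<in> F" "f2 \<in> F"
  shows "disagree MX pT (f1 \<circ> g) (f2 \<circ> g)
           \<le> disagree MX pS (f1 \<circ> g) (f2 \<circ> g) + latent_div MX pS pT F g"
proof -
  have "\<bar>disagree MX pS (f1 \<circ> g) (f2 \<circ> g) - disagree MX pT (f1 \<circ> g) (f2 \<circ> g)\<bar>
          \<le> latent_div MX pS pT F g"
    unfolding latent_div_def
    by (rule cSup_upper)
      (use assms abs_disagree_diff_le_1[OF S T] in \<open>auto intro!: bdd_aboveI[where M=1]\<close>)
  then show ?thesis
    by simp
qed

lemma disagree_le_add_FG_div: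
  assumes S: "labelled_prob_space pS MX" and T: "labelled_prob_space pT MX"
    and "\<forall>f\<in>F. \<forall>g\<in>G. f \<circ> g \<in> measurable MX (count_space UNIV)"
    and "f \<in> F" "g1 \<in> G" "g2 \<in> G"
  shows "disagree MX pT (f \<circ> g1) (f \<circ> g2)
           \<le> disagree MX pS (f \<circ> g1) (f \<circ> g2) + FG_div MX pS pT F G"
proof -
  have "\<bar>disagree MX pS (f \<circ> g1) (f \<circ> g2) - disagree MX pT (f \<circ> g1) (f \<circ> g2)\<bar>
          \<le> FG_div MX pS pT F G"
    unfolding FG_div_def
    by (rule cSup_upper)
      (use assms abs_disagree_diff_le_1[OF S T] in \<open>auto intro!: bdd_aboveI[where M=1]\<close>)
  then show ?thesis
    by simp
qed

lemma target_risk_bound: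
  assumes S: "labelled_prob_space pS MX" and T: "labelled_prob_space pT MX"
    and meas: "\<forall>f\<in>F. \<forall>g\<in>G. f \<circ> g \<in> measurable MX (count_space UNIV)"
    and f: "f \<in> F" and g: "g \<in> G" and f': "f' \<in> F" and g': "g' \<in> G"
  shows "risk pT (f \<circ> g) \<le> risk pS (f \<circ> g) + latent_div MX pS pT F g + FG_div MX pS pT F G
           + (2 * risk pS (f' \<circ> g) + risk pS (f' \<circ> g') + risk pT (f' \<circ> g'))"
proof -
  have m: "f \<circ> g \<in> measurable MX (count_space UNIV)" "f' \<circ> g \<in> measurable MX (count_space UNIV)"
    "f' \<circ> g' \<in> measurable MX (count_space UNIV)"
    using meas f g f' g' by auto
  have "risk pT (f \<circ> g) \<le> disagree MX pT (f \<circ> g) (f' \<circ> g) + risk pT (f' \<circ> g)"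
    by (rule labelled_prob_space.risk_le_disagree_add_risk[OF T m(1,2)])
  moreover have "risk pT (f' \<circ> g) \<le> disagree MX pT (f' \<circ> g) (f' \<circ> g') + risk pT (f' \<circ> g')"
    by (rule labelled_prob_space.risk_le_disagree_add_risk[OF T m(2,3)])
  moreover have "disagree MX pT (f \<circ> g) (f' \<circ> g)
      \<le> disagree MX pS (f \<circ> g) (f' \<circ> g) + latent_div MX pS pT F g"
    using disagree_le_add_latent_div[OF S T _ f f'] meas g by blast
  moreover have "disagree MX pT (f' \<circ> g) (f' \<circ> g')
      \<le> disagree MX pS (f' \<circ> g) (f' \<circ> g') + FG_div MX pS pT F G"
    by (rule disagree_le_add_FG_div[OF S T meas f' g g'])
  moreover have "disagree MX pS (f \<circ> g) (f' \<circ> g) \<le> risk pS (f \<circ> g) + risk pS (f' \<circ> g)"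
    by (rule labelled_prob_space.disagree_le_risk_add_risk[OF S m(1,2)])
  moreover have "disagree MX pS (f' \<circ> g) (f' \<circ> g') \<le> risk pS (f' \<circ> g) + risk pS (f' \<circ> g')"
    by (rule labelled_prob_space.disagree_le_risk_add_risk[OF S m(2,3)])
  ultimately show ?thesis
    by linarith
qed

theorem theorem4:
  fixes X :: "(real ^ 'n) set"
    and Z :: "'z set"
    and G :: "((real ^ 'n) \<Rightarrow> 'z) set"
    and F :: "('z \<Rightarrow> bool) set"
    and pS pT :: "((real ^ 'n) \<times> bool) measure"
    and f :: "'z \<Rightarrow> bool" and g :: "(real ^ 'n) \<Rightarrow> 'z"
  assumes G_maps: "\<forall>g\<in>G. \<forall>x\<in>X. g x \<in> Z"
    and probS: "prob_space pS"
    and probT: "prob_space pT"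
    and setsS: "sets pS = sets (restrict_space borel X \<Otimes>\<^sub>M count_space UNIV)"
    and setsT: "sets pT = sets (restrict_space borel X \<Otimes>\<^sub>M count_space UNIV)"
    and meas: "\<forall>f\<in>F. \<forall>g\<in>G. (f \<circ> g) \<in> measurable (restrict_space borel X) (count_space UNIV)"
    and f: "f \<in> F" and g: "g \<in> G"
  shows "risk pT (f \<circ> g) \<le> risk pS (f \<circ> g)
           + latent_div (restrict_space borel X) pS pT F g
           + FG_div (restrict_space borel X) pS pT F G
           + lambda_FG pS pT F G g"
proof -
  \<comment> \<open>\<open>G_maps\<close> only names the representation space \<open>Z\<close>; the bound does not depend on it.\<close>
  let ?MX = "restrict_space borel X"
  have S: "labelled_prob_space pS ?MX" and T: "labelled_prob_space pT ?MX"
    using probS probT setsS setsT by (simp_all add: labelled_prob_space_def labelled_prob_space_axioms_def)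
  have "risk pT (f \<circ> g) - risk pS (f \<circ> g) - latent_div ?MX pS pT F g - FG_div ?MX pS pT F G
          \<le> lambda_FG pS pT F G g"
    unfolding lambda_FG_def
    by (rule cInf_greatest)
      (use f g target_risk_bound[OF S T meas f g] in fastforce)+
  then show ?thesis
    by linarith
qed

end
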